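(* Let $X$ and $U$ be Hilbert spaces, let $A$ generate an analytic semigroup $\{S(t);t\geq0\}$ on $X$, with $D(A)$ endowed with the graph norm, and let $B\in\mathcal L(D(A),U)$. For $u_0\in D(A)$ define $g(t)=\|BS(t)u_0\|_U^2$, $t>0$, and $u(t)=S(t)u_0$. Then for each $u_0\in D(A)$ the function $g$ is analytic on $(0,+\infty)$. Furthermore, there are constants $K\geq1$ and $\rho\in(0,1)$ independent of $u_0$ such that, whenever $0\leq s<t$ with $0<t-s\leq1$, $$|g^{(\beta)}(t)|\leq K\frac{(t-s)^{-2}\beta!}{(\rho(t-s))^\beta}\|u(s)\|_X^2\quad\text{for all }\beta\in\mathbb N.$$
   Context: $g^{(\beta)}$ denotes the $\beta$-th derivative of $g$. *)

theory Defs
  imports "HOL-Analysis.Analysis"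
begin

definition C0_semigroup :: "(real \<Rightarrow> ('x::real_normed_vector \<Rightarrow>\<^sub>L 'x)) \<Rightarrow> bool" where
  "C0_semigroup S \<longleftrightarrow>
     S 0 = id_blinfun \<and>
     (\<forall>t s. 0 \<le> t \<longrightarrow> 0 \<le> s \<longrightarrow> S (t + s) = S t o\<^sub>L S s) \<and>
     (\<forall>x. ((\<lambda>t. blinfun_apply (S t) x) \<longlongrightarrow> x) (at_right 0))"

definition semigroup_generator ::
  "(real \<Rightarrow> ('x::real_normed_vector \<Rightarrow>\<^sub>L 'x)) \<Rightarrow> 'x set \<Rightarrow> ('x \<Rightarrow> 'x) \<Rightarrow> bool" where
  "semigroup_generator S D A \<longleftrightarrow>
     D = {x. \<exists>y. ((\<lambda>h. (1 / h) *\<^sub>R (blinfun_apply (S h) x - x)) \<longlongrightarrow> y) (at_right 0)} \<and>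
     (\<forall>x\<in>D. ((\<lambda>h. (1 / h) *\<^sub>R (blinfun_apply (S h) x - x)) \<longlongrightarrow> A x) (at_right 0))"

text \<open>A generates an analytic semigroup S (real-space form of the standard definition:
  S is a C0-semigroup with generator A, S(t) maps X into D(A) for t > 0 and
  sup_{0<t\<le>1} t \<parallel>A S(t)\<parallel> < \<infinity>).\<close>
definition generates_analytic_semigroup ::
  "'x set \<Rightarrow> ('x \<Rightarrow> 'x) \<Rightarrow> (real \<Rightarrow> ('x::real_normed_vector \<Rightarrow>\<^sub>L 'x)) \<Rightarrow> bool" where
  "generates_analytic_semigroup D A S \<longleftrightarrow>
     C0_semigroup S \<and> semigroup_generator S D A \<and>
     (\<forall>t>0. \<forall>x. blinfun_apply (S t) x \<in> D) \<and>
     (\<exists>C. \<forall>t. 0 < t \<longrightarrow> t \<le> 1 \<longrightarrow> (\<forall>x. norm (A (blinfun_apply (S t) x)) \<le> C / t * norm x))"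

definition bounded_on_graph_norm ::
  "'x set \<Rightarrow> ('x::real_normed_vector \<Rightarrow> 'x) \<Rightarrow> ('x \<Rightarrow> 'u::real_normed_vector) \<Rightarrow> bool" where
  "bounded_on_graph_norm D A B \<longleftrightarrow>
     (\<forall>x\<in>D. \<forall>y\<in>D. B (x + y) = B x + B y) \<and>
     (\<forall>c. \<forall>x\<in>D. B (c *\<^sub>R x) = c *\<^sub>R B x) \<and>
     (\<exists>M. \<forall>x\<in>D. norm (B x) \<le> M * (norm x + norm (A x)))"

definition real_analytic_on :: "(real \<Rightarrow> real) \<Rightarrow> real set \<Rightarrow> bool" where
  "real_analytic_on g T \<longleftrightarrow>
     (\<forall>x\<in>T. \<exists>r>0. \<exists>a::nat \<Rightarrow> real.
        \<forall>y. \<bar>y - x\<bar> < r \<longrightarrow> (\<lambda>n. a n * (y - x) ^ n) sums g y)"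

end

theory Submission
  imports Defs
begin

text \<open>
  Splitting \<open>S(\<delta>)\<close> into \<open>k\<close> equal steps and using \<open>\<parallel>A S(\<sigma>)\<parallel> \<le> C/\<sigma>\<close> gives
  \<open>\<parallel>A\<^sup>k S(\<delta>)\<parallel> \<le> (kC/\<delta>)\<^sup>k \<le> (eC/\<delta>)\<^sup>k k!\<close>. Since \<open>B A\<^sup>k S(t) u\<^sub>0\<close> is the \<open>k\<close>-th derivative
  of \<open>B S(t) u\<^sub>0\<close> and \<open>B\<close> is bounded in the graph norm, writing \<open>S(t) = S(t - s) S(s)\<close> bounds it
  by a multiple of \<open>(eC/(t - s))\<^sup>k\<^sup>+\<^sup>1 (k + 1)! \<parallel>u(s)\<parallel>\<close>. Leibniz' rule for
  \<open>g = \<langle>B S(t) u\<^sub>0, B S(t) u\<^sub>0\<rangle>\<close> then gives the derivative estimate with \<open>\<rho> = 1/(4eC)\<close>, and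
  the estimate makes the Taylor remainders of \<open>g\<close> decay geometrically, i.e. \<open>g\<close> is analytic.
  Differentiating \<open>t \<mapsto> S(t) x\<close> from the left needs \<open>S\<close> to be bounded on compact intervals;
  this follows from strong continuity by the Baire category theorem.
\<close>

lemma has_vector_derivative_at_split:
  fixes f :: "real \<Rightarrow> 'a::real_normed_vector"
  assumes right: "((\<lambda>h. (1/h) *\<^sub>R (f (x + h) - f x)) \<longlongrightarrow> v) (at_right 0)"
    and left: "((\<lambda>h. (1/h) *\<^sub>R (f x - f (x - h))) \<longlongrightarrow> v) (at_right 0)"
  shows "(f has_vector_derivative v) (at x)"
proof -
  have "((\<lambda>h. (1/h) *\<^sub>R (f (x + h) - f x)) \<longlongrightarrow> v) (at_left 0)"
    unfolding filterlim_at_left_to_right using left by (simp add: algebra_simps)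
  then have "((\<lambda>h. (1/h) *\<^sub>R (f (x + h) - f x)) \<longlongrightarrow> v) (at 0)"
    using right by (rule filterlim_split_at)
  then have "((\<lambda>h. (1/h) *\<^sub>R (f (x + h) - f x) - v) \<longlongrightarrow> 0) (at 0)"
    by (rule LIM_zero)
  then have "((\<lambda>h. norm (f (x + h) - f x - h *\<^sub>R v) / norm h) \<longlongrightarrow> 0) (at 0)"
  proof (rule tendsto_norm_zero[THEN Lim_transform_eventually])
    have "norm ((1/h) *\<^sub>R (f (x + h) - f x) - v) = norm (f (x + h) - f x - h *\<^sub>R v) / norm h"
      if "h \<noteq> 0" for h :: real
    proof -
      have "(1/h) *\<^sub>R (f (x + h) - f x) - v = (1/h) *\<^sub>R (f (x + h) - f x - h *\<^sub>R v)"
        using that by (simp add: algebra_simps)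
      then show ?thesis by (simp add: divide_inverse mult.commute)
    qed
    then show "\<forall>\<^sub>F h in at 0. norm ((1/h) *\<^sub>R (f (x + h) - f x) - v) = norm (f (x + h) - f x - h *\<^sub>R v) / norm h"
      by (auto simp: eventually_at_filter)
  qed
  then show ?thesis
    by (simp add: has_vector_derivative_def has_derivative_at bounded_linear_scaleR_left)
qed

lemma power_self_le_exp_fact: "real n ^ n \<le> exp 1 ^ n * fact n"
proof -
  have series: "(\<lambda>i. real n ^ i /\<^sub>R fact i) sums exp (real n)"
    by (rule exp_converges)
  have "real n ^ n /\<^sub>R fact n \<le> exp (real n)"
    using sum_le_suminf[OF sums_summable[OF series], of "{n}"] sums_unique[OF series] by simp
  also have "exp (real n) = exp 1 ^ n"
    using exp_of_nat_mult[of n 1] by simp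
  finally show ?thesis by (simp add: field_simps)
qed

lemma real_Suc_le_two_power: "real (Suc n) \<le> 2 ^ n"
  by (metis Suc_leI less_exp of_nat_le_iff of_nat_numeral of_nat_power)

lemma fact_Suc_le_two_power_fact: "(fact (Suc k) :: real) \<le> 2 ^ k * fact k"
  using real_Suc_le_two_power[of k] by (simp add: mult_right_mono)

lemma choose_fact_Suc_le:
  assumes "j \<le> n"
  shows "real (n choose j) * (fact (Suc j) * fact (Suc (n - j))) \<le> 2 ^ n * fact n"
proof -
  have "real (n choose j) * (fact (Suc j) * fact (Suc (n - j)))
      \<le> real (n choose j) * ((2 ^ j * fact j) * (2 ^ (n - j) * fact (n - j)))"
    by (intro mult_left_mono mult_mono fact_Suc_le_two_power_fact) auto
  also have "\<dots> = 2 ^ n * (fact j * fact (n - j) * real (n choose j))"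
    using assms by (simp add: power_add[symmetric] algebra_simps)
  also have "fact j * fact (n - j) * real (n choose j) = (fact n :: real)"
    using binomial_fact_lemma[OF assms] by (metis of_nat_fact of_nat_mult)
  finally show ?thesis .
qed

lemma sum_choose_Pascal:
  fixes p :: "nat \<Rightarrow> nat \<Rightarrow> real"
  shows "(\<Sum>j\<le>n. real (n choose j) * (p j (Suc n - j) + p (Suc j) (n - j)))
       = (\<Sum>j\<le>Suc n. real (Suc n choose j) * p j (Suc n - j))"
proof -
  have shifted: "(\<Sum>j\<le>n. real (n choose j) * p j (Suc n - j))
     = p 0 (Suc n) + (\<Sum>j\<le>n. real (n choose Suc j) * p (Suc j) (n - j))"
  proof -
    have "(\<Sum>j\<le>n. real (n choose j) * p j (Suc n - j))
        = (\<Sum>j\<le>Suc n. real (n choose j) * p j (Suc n - j))"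
      by simp
    also have "\<dots> = p 0 (Suc n) + (\<Sum>j\<le>n. real (n choose Suc j) * p (Suc j) (n - j))"
      by (subst sum.atMost_Suc_shift) simp
    finally show ?thesis .
  qed
  have "(\<Sum>j\<le>Suc n. real (Suc n choose j) * p j (Suc n - j))
      = p 0 (Suc n) + (\<Sum>j\<le>n. real (n choose j) * p (Suc j) (n - j))
        + (\<Sum>j\<le>n. real (n choose Suc j) * p (Suc j) (n - j))"
    by (subst sum.atMost_Suc_shift) (simp add: sum.distrib distrib_right)
  then show ?thesis
    using shifted by (simp add: sum.distrib distrib_left)
qed

definition inner_Leibniz_sum :: "(nat \<Rightarrow> real \<Rightarrow> 'a::real_inner) \<Rightarrow> nat \<Rightarrow> real \<Rightarrow> real" where
  "inner_Leibniz_sum h n s = (\<Sum>j\<le>n. real (n choose j) * inner (h j s) (h (n - j) s))"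

lemma has_real_derivative_inner_Leibniz_sum:
  assumes "\<And>k. ((\<lambda>s. h k s) has_vector_derivative h (Suc k) \<tau>) (at \<tau>)"
  shows "((\<lambda>s. inner_Leibniz_sum h n s) has_real_derivative inner_Leibniz_sum h (Suc n) \<tau>) (at \<tau>)"
proof -
  have "((\<lambda>s. inner (h i s) (h j s)) has_real_derivative
       inner (h i \<tau>) (h (Suc j) \<tau>) + inner (h (Suc i) \<tau>) (h j \<tau>)) (at \<tau>)" for i j
    using bounded_bilinear.has_vector_derivative[OF bounded_bilinear_inner assms assms]
    by (simp add: has_real_derivative_iff_has_vector_derivative)
  then have "((\<lambda>s. inner_Leibniz_sum h n s) has_real_derivative
      (\<Sum>j\<le>n. real (n choose j) * (inner (h j \<tau>) (h (Suc n - j) \<tau>) + inner (h (Suc j) \<tau>) (h (n - j) \<tau>)))) (at \<tau>)"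
    unfolding inner_Leibniz_sum_def
    by (intro DERIV_sum DERIV_cmult) (simp add: Suc_diff_le)
  then show ?thesis
    using sum_choose_Pascal[of n "\<lambda>i j. inner (h i \<tau>) (h j \<tau>)"] by (simp add: inner_Leibniz_sum_def)
qed

lemma higher_deriv_inner_self:
  assumes "open U" "\<tau> \<in> U"
    and deriv: "\<And>\<sigma> k. \<sigma> \<in> U \<Longrightarrow> ((\<lambda>s. h k s) has_vector_derivative h (Suc k) \<sigma>) (at \<sigma>)"
  shows "(deriv ^^ n) (\<lambda>s. inner (h 0 s) (h 0 s)) \<tau> = inner_Leibniz_sum h n \<tau>"
    and "((deriv ^^ n) (\<lambda>s. inner (h 0 s) (h 0 s)) has_real_derivative
           (deriv ^^ Suc n) (\<lambda>s. inner (h 0 s) (h 0 s)) \<tau>) (at \<tau>)"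
proof -
  have eq: "(deriv ^^ n) (\<lambda>s. inner (h 0 s) (h 0 s)) \<sigma> = inner_Leibniz_sum h n \<sigma>" if "\<sigma> \<in> U" for \<sigma> n
    using that
  proof (induction n arbitrary: \<sigma>)
    case 0
    then show ?case by (simp add: inner_Leibniz_sum_def)
  next
    case (Suc n)
    have "\<forall>\<^sub>F s in nhds \<sigma>. (deriv ^^ n) (\<lambda>s. inner (h 0 s) (h 0 s)) s = inner_Leibniz_sum h n s"
      using eventually_nhds_in_open[OF \<open>open U\<close> Suc.prems] by (auto elim!: eventually_mono Suc.IH)
    then have "(deriv ^^ Suc n) (\<lambda>s. inner (h 0 s) (h 0 s)) \<sigma> = deriv (inner_Leibniz_sum h n) \<sigma>"
      by (simp add: deriv_cong_ev)
    also have "\<dots> = inner_Leibniz_sum h (Suc n) \<sigma>"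
      using has_real_derivative_inner_Leibniz_sum[where h=h, OF deriv[OF Suc.prems]] by (rule DERIV_imp_deriv)
    finally show ?case .
  qed
  then show "(deriv ^^ n) (\<lambda>s. inner (h 0 s) (h 0 s)) \<tau> = inner_Leibniz_sum h n \<tau>"
    using assms(2) .
  have "\<forall>\<^sub>F s in nhds \<tau>. (deriv ^^ n) (\<lambda>s. inner (h 0 s) (h 0 s)) s = inner_Leibniz_sum h n s"
    using eventually_nhds_in_open[OF assms(1,2)] by (auto elim!: eventually_mono eq)
  then show "((deriv ^^ n) (\<lambda>s. inner (h 0 s) (h 0 s)) has_real_derivative
           (deriv ^^ Suc n) (\<lambda>s. inner (h 0 s) (h 0 s)) \<tau>) (at \<tau>)"
    using has_real_derivative_inner_Leibniz_sum[where h=h, OF deriv[OF assms(2)], of n] eq[OF assms(2), of "Suc n"]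
    by (simp add: DERIV_cong_ev)
qed

lemma abs_inner_Leibniz_sum_le:
  assumes h: "\<And>j. norm (h j s) \<le> a * \<Lambda> ^ Suc j * fact (Suc j)" and "0 \<le> a" "0 \<le> \<Lambda>"
  shows "\<bar>inner_Leibniz_sum h n s\<bar> \<le> a\<^sup>2 * \<Lambda> ^ (n + 2) * 4 ^ n * fact n"
proof -
  have summand: "\<bar>real (n choose j) * inner (h j s) (h (n - j) s)\<bar> \<le> a\<^sup>2 * \<Lambda> ^ (n + 2) * (2 ^ n * fact n)"
    if "j \<le> n" for j
  proof -
    have "\<bar>real (n choose j) * inner (h j s) (h (n - j) s)\<bar>
        \<le> real (n choose j) * (norm (h j s) * norm (h (n - j) s))"
      by (simp add: abs_mult Cauchy_Schwarz_ineq2 mult_left_mono)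
    also have "\<dots> \<le> real (n choose j) * ((a * \<Lambda> ^ Suc j * fact (Suc j)) * (a * \<Lambda> ^ Suc (n - j) * fact (Suc (n - j))))"
      by (intro mult_left_mono mult_mono h) (use assms in auto)
    also have "\<dots> = a\<^sup>2 * \<Lambda> ^ (n + 2) * (real (n choose j) * (fact (Suc j) * fact (Suc (n - j))))"
      using that by (simp add: power2_eq_square power_add[symmetric] algebra_simps)
    also have "\<dots> \<le> a\<^sup>2 * \<Lambda> ^ (n + 2) * (2 ^ n * fact n)"
      using choose_fact_Suc_le[OF that] assms by (intro mult_left_mono) auto
    finally show ?thesis .
  qed
  have "\<bar>inner_Leibniz_sum h n s\<bar> \<le> (\<Sum>j\<le>n. a\<^sup>2 * \<Lambda> ^ (n + 2) * (2 ^ n * fact n))"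
    unfolding inner_Leibniz_sum_def by (rule order_trans[OF sum_abs sum_mono]) (simp only: atMost_iff summand)
  also have "\<dots> = real (Suc n) * (a\<^sup>2 * \<Lambda> ^ (n + 2) * 2 ^ n * fact n)"
    by simp
  also have "\<dots> \<le> 2 ^ n * (a\<^sup>2 * \<Lambda> ^ (n + 2) * 2 ^ n * fact n)"
    using real_Suc_le_two_power[of n] assms by (intro mult_right_mono) auto
  also have "\<dots> = a\<^sup>2 * \<Lambda> ^ (n + 2) * 4 ^ n * fact n"
    by (simp add: power_mult_distrib[symmetric])
  finally show ?thesis .
qed

lemma Taylor_series_sums_if_deriv_bound:
  fixes g :: "real \<Rightarrow> real"
  assumes "0 < r"
    and smooth: "\<And>m t. \<bar>t - x\<bar> \<le> r \<Longrightarrow> ((deriv ^^ m) g has_real_derivative (deriv ^^ Suc m) g t) (at t)"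
    and bound: "\<And>n t. \<bar>t - x\<bar> \<le> r \<Longrightarrow> \<bar>(deriv ^^ n) g t\<bar> \<le> c * fact n / r ^ n"
    and y: "\<bar>y - x\<bar> < r"
  shows "(\<lambda>n. (deriv ^^ n) g x / fact n * (y - x) ^ n) sums g y"
proof (cases "y = x")
  case True
  then show ?thesis
    using powser_sums_zero[of "\<lambda>n. (deriv ^^ n) g x / fact n"] by simp
next
  case False
  define q where "q = \<bar>y - x\<bar> / r"
  have q: "0 \<le> q" "q < 1" using y \<open>0 < r\<close> by (auto simp: q_def)
  have remainder: "\<bar>g y - (\<Sum>m<N. (deriv ^^ m) g x / fact m * (y - x) ^ m)\<bar> \<le> c * q ^ N"
    if "0 < N" for N
  proof -
    obtain t where t: "\<bar>t - x\<bar> \<le> \<bar>y - x\<bar>"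
      and Taylor: "g y = (\<Sum>m<N. (deriv ^^ m) g x / fact m * (y - x) ^ m) + (deriv ^^ N) g t / fact N * (y - x) ^ N"
    proof -
      have "\<forall>m t. m < N \<and> min x y \<le> t \<and> t \<le> max x y \<longrightarrow>
          ((deriv ^^ m) g has_real_derivative (deriv ^^ Suc m) g t) (at t)"
      proof (intro allI impI)
        fix m t assume "m < N \<and> min x y \<le> t \<and> t \<le> max x y"
        then have "\<bar>t - x\<bar> \<le> r" using y by auto
        then show "((deriv ^^ m) g has_real_derivative (deriv ^^ Suc m) g t) (at t)"
          by (rule smooth)
      qed
      from Taylor[of N "\<lambda>m. (deriv ^^ m) g" g, OF \<open>0 < N\<close> _ this, of x y] False
      obtain t where "if y < x then y < t \<and> t < x else x < t \<and> t < y"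
        and "g y = (\<Sum>m<N. (deriv ^^ m) g x / fact m * (y - x) ^ m) + (deriv ^^ N) g t / fact N * (y - x) ^ N"
        by auto
      moreover from this(1) have "\<bar>t - x\<bar> \<le> \<bar>y - x\<bar>"
        by (auto split: if_splits)
      ultimately show ?thesis using that by blast
    qed
    have "\<bar>g y - (\<Sum>m<N. (deriv ^^ m) g x / fact m * (y - x) ^ m)\<bar> = \<bar>(deriv ^^ N) g t\<bar> / fact N * \<bar>y - x\<bar> ^ N"
      by (simp add: Taylor abs_mult power_abs)
    also have "\<dots> \<le> c * fact N / r ^ N / fact N * \<bar>y - x\<bar> ^ N"
      using t y by (intro mult_right_mono divide_right_mono bound) auto
    also have "\<dots> = c * q ^ N"
      by (simp add: q_def power_divide)
    finally show ?thesis .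
  qed
  have "(\<lambda>N. c * q ^ N) \<longlonglongrightarrow> 0"
    using q by (intro tendsto_mult_right_zero LIMSEQ_power_zero) simp
  then have "(\<lambda>N. g y - (\<Sum>m<N. (deriv ^^ m) g x / fact m * (y - x) ^ m)) \<longlonglongrightarrow> 0"
  proof (rule Lim_null_comparison[rotated])
    show "\<forall>\<^sub>F N in sequentially. norm (g y - (\<Sum>m<N. (deriv ^^ m) g x / fact m * (y - x) ^ m)) \<le> c * q ^ N"
      using eventually_gt_at_top[of 0] by eventually_elim (simp only: real_norm_def remainder)
  qed
  from tendsto_diff[OF tendsto_const[of "g y"] this] show ?thesis
    by (simp add: sums_def)
qed

lemma real_analytic_on_if_deriv_estimate:
  fixes g \<Phi> :: "real \<Rightarrow> real"
  assumes smooth: "\<And>m t. 0 < t \<Longrightarrow> ((deriv ^^ m) g has_real_derivative (deriv ^^ Suc m) g t) (at t)"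
    and estimate: "\<And>\<beta> s t. 0 \<le> s \<Longrightarrow> s < t \<Longrightarrow> t - s \<le> 1 \<Longrightarrow>
        \<bar>(deriv ^^ \<beta>) g t\<bar> \<le> K * ((t - s) powr (-2) * fact \<beta> / (\<rho> * (t - s)) ^ \<beta>) * \<Phi> s"
    and "0 \<le> K" "0 < \<rho>" "\<rho> < 1" "\<And>s. 0 \<le> \<Phi> s"
  shows "real_analytic_on g {0<..}"
  unfolding real_analytic_on_def
proof
  fix x :: real assume "x \<in> {0<..}"
  define d where "d = min (x / 2) (1 / 2)"
  define s where "s = x - d"
  define r where "r = \<rho> * d / 2"
  have d: "0 < d" "d \<le> x / 2" "d \<le> 1 / 2" using \<open>x \<in> {0<..}\<close> by (auto simp: d_def)
  have r: "0 < r" "r < d / 2" using d \<open>0 < \<rho>\<close> \<open>\<rho> < 1\<close> by (auto simp: r_def)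
  have near: "0 \<le> s" "s < t" "t - s \<le> 1" "d / 2 \<le> t - s" if "\<bar>t - x\<bar> \<le> r" for t
  proof -
    have "- r \<le> t - x" "t - x \<le> r" using that by auto
    then show "0 \<le> s" "s < t" "t - s \<le> 1" "d / 2 \<le> t - s"
      using d r unfolding s_def by linarith+
  qed
  have bound: "\<bar>(deriv ^^ n) g t\<bar> \<le> (K * (4 / d\<^sup>2) * \<Phi> s) * fact n / r ^ n"
    if "\<bar>t - x\<bar> \<le> r" for n t
  proof -
    have "(t - s) powr (-2) = 1 / (t - s)\<^sup>2"
      using near(2)[OF that] powr_realpow[of "t - s" 2] by (simp add: powr_minus divide_inverse)
    also have "\<dots> \<le> 1 / (d / 2)\<^sup>2"
      using near[OF that] d by (intro divide_left_mono power_mono) auto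
    finally have "(t - s) powr (-2) \<le> 4 / d\<^sup>2"
      by (simp add: power_divide)
    moreover have "r ^ n \<le> (\<rho> * (t - s)) ^ n"
      using near[OF that] r \<open>0 < \<rho>\<close> by (intro power_mono) (auto simp: r_def)
    ultimately have quotient_bound: "(t - s) powr (-2) * fact n / (\<rho> * (t - s)) ^ n \<le> 4 / d\<^sup>2 * fact n / r ^ n"
      using r by (intro frac_le mult_right_mono) auto
    have "\<bar>(deriv ^^ n) g t\<bar> \<le> K * ((t - s) powr (-2) * fact n / (\<rho> * (t - s)) ^ n) * \<Phi> s"
      using estimate[OF near(1-3)[OF that]] .
    also have "\<dots> \<le> K * (4 / d\<^sup>2 * fact n / r ^ n) * \<Phi> s"
      using assms quotient_bound by (intro mult_left_mono mult_right_mono) auto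
    also have "\<dots> = (K * (4 / d\<^sup>2) * \<Phi> s) * fact n / r ^ n"
      by (simp add: ac_simps)
    finally show ?thesis .
  qed
  have smooth_near: "((deriv ^^ m) g has_real_derivative (deriv ^^ Suc m) g t) (at t)"
    if "\<bar>t - x\<bar> \<le> r" for m t
    using near(1,2)[OF that] by (intro smooth) linarith
  have "\<forall>y. \<bar>y - x\<bar> < r \<longrightarrow> (\<lambda>n. (deriv ^^ n) g x / fact n * (y - x) ^ n) sums g y"
    using Taylor_series_sums_if_deriv_bound[OF r(1) smooth_near bound] by (intro allI impI)
  then show "\<exists>r>0. \<exists>a. \<forall>y. \<bar>y - x\<bar> < r \<longrightarrow> (\<lambda>n. a n * (y - x) ^ n) sums g y"
    using r(1) by (intro exI[of _ r] conjI exI[of _ "\<lambda>n. (deriv ^^ n) g x / fact n"])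
qed

lemma uniform_bound_near_zero:
  fixes f :: "real \<Rightarrow> 'a::{real_normed_vector, complete_space} \<Rightarrow>\<^sub>L 'b::real_normed_vector"
  assumes pointwise: "\<And>x. \<exists>b>0. \<exists>B. \<forall>t\<in>{0..b}. norm (f t x) \<le> B"
  shows "\<exists>\<eta>>0. \<exists>K\<ge>0. \<forall>t\<in>{0..\<eta>}. \<forall>x. norm (f t x) \<le> K * norm x"
proof -
  define E where "E n = {x. \<forall>t\<in>{0..1 / real (Suc n)}. norm (f t x) \<le> real n}" for n
  have closed: "closed (E n)" for n
  proof -
    have "E n = (\<Inter>t\<in>{0..1 / real (Suc n)}. {x. norm (f t x) \<le> real n})"
      unfolding E_def by auto
    then show ?thesis
      by (auto intro!: closed_INT closed_Collect_le continuous_intros)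
  qed
  have cover: "\<Union>(range E) = UNIV"
  proof (intro set_eqI iffI)
    fix x :: 'a
    obtain b B where "0 < b" and bound: "\<forall>t\<in>{0..b}. norm (f t x) \<le> B"
      using pointwise by blast
    define n where "n = nat \<lceil>max B (1 / b)\<rceil>"
    have "B \<le> real n" "1 / b \<le> real n" unfolding n_def by linarith+
    then have "1 / real (Suc n) \<le> b"
      using \<open>0 < b\<close> by (auto simp: field_simps)
    then have "x \<in> E n"
      using bound \<open>B \<le> real n\<close> unfolding E_def by force
    then show "x \<in> \<Union>(range E)" by blast
  qed simp
  obtain n where "interior (E n) \<noteq> {}"
  proof (rule ccontr)
    assume "\<not> thesis"
    then have "euclidean interior_of \<Union>(range E) = {}"
      using that closed completely_metrizable_space_euclidean
      by (intro Baire_category_alt) (auto simp: closed_closedin[symmetric])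
    then show False using cover by simp
  qed
  then obtain x0 r where "0 < r" and ball: "ball x0 r \<subseteq> E n"
    by (metis equals0I open_contains_ball_eq open_interior interior_subset subset_trans)
  have "norm (f t y) \<le> (4 * real n / r) * norm y" if t: "t \<in> {0..1 / real (Suc n)}" for t y
  proof (cases "y = 0")
    case True
    then show ?thesis by (simp add: blinfun.zero_right)
  next
    case False
    define c where "c = r / (2 * norm y)"
    have "0 < c" using \<open>0 < r\<close> False by (simp add: c_def)
    have "x0 + c *\<^sub>R y \<in> E n" "x0 \<in> E n"
      using ball \<open>0 < r\<close> False by (auto simp: c_def dist_norm subset_iff)
    then have "norm (f t (x0 + c *\<^sub>R y)) \<le> real n" "norm (f t x0) \<le> real n"
      using t unfolding E_def by auto
    moreover have "c * norm (f t y) = norm (f t (x0 + c *\<^sub>R y) - f t x0)"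
      using \<open>0 < c\<close> by (simp add: blinfun.add_right blinfun.scaleR_right)
    ultimately have "c * norm (f t y) \<le> 2 * real n"
      using norm_triangle_ineq4[of "f t (x0 + c *\<^sub>R y)" "f t x0"] by linarith
    then show ?thesis
      using \<open>0 < c\<close> \<open>0 < r\<close> False by (simp add: c_def field_simps)
  qed
  then show ?thesis
    using \<open>0 < r\<close> by (intro exI[of _ "1 / real (Suc n)"] conjI exI[of _ "4 * real n / r"]) auto
qed

locale C0_semigroup_generator =
  fixes S :: "real \<Rightarrow> ('x::{real_normed_vector, complete_space} \<Rightarrow>\<^sub>L 'x)"
    and D :: "'x set" and A :: "'x \<Rightarrow> 'x"
  assumes C0: "C0_semigroup S" and generator: "semigroup_generator S D A"
begin

definition difference_quotient :: "'x \<Rightarrow> real \<Rightarrow> 'x" where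
  "difference_quotient x h = (1 / h) *\<^sub>R (S h x - x)"

lemma semigroup_zero [simp]: "S 0 x = x"
  using C0 unfolding C0_semigroup_def by simp

lemma semigroup_add: "0 \<le> t \<Longrightarrow> 0 \<le> s \<Longrightarrow> S (t + s) x = S t (S s x)"
  using C0 unfolding C0_semigroup_def by simp

lemma semigroup_commute: "0 \<le> t \<Longrightarrow> 0 \<le> s \<Longrightarrow> S t (S s x) = S s (S t x)"
  using semigroup_add[of t s x] semigroup_add[of s t x] by (simp add: add.commute)

lemma strongly_continuous: "((\<lambda>t. S t x) \<longlongrightarrow> x) (at_right 0)"
  using C0 unfolding C0_semigroup_def by simp

lemma generator_limit: "x \<in> D \<Longrightarrow> (difference_quotient x \<longlongrightarrow> A x) (at_right 0)"
  using generator unfolding semigroup_generator_def difference_quotient_def[abs_def] by simp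

lemma in_domainI:
  assumes "(difference_quotient x \<longlongrightarrow> y) (at_right 0)"
  shows "x \<in> D" and "A x = y"
proof -
  show "x \<in> D"
    using generator assms unfolding semigroup_generator_def difference_quotient_def[abs_def] by blast
  then show "A x = y"
    using tendsto_unique[OF trivial_limit_at_right_real generator_limit assms] by blast
qed

lemma difference_quotient_diff:
  "difference_quotient (x - y) = (\<lambda>h. difference_quotient x h - difference_quotient y h)"
  by (auto simp: difference_quotient_def blinfun.diff_right algebra_simps)

lemma difference_quotient_scaleR:
  "difference_quotient (c *\<^sub>R x) = (\<lambda>h. c *\<^sub>R difference_quotient x h)"
  by (auto simp: difference_quotient_def blinfun.scaleR_right algebra_simps)

lemma domain_diff:
  assumes "x \<in> D" "y \<in> D"
  shows "x - y \<in> D" and "A (x - y) = A x - A y"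
proof -
  have "(difference_quotient (x - y) \<longlongrightarrow> A x - A y) (at_right 0)"
    unfolding difference_quotient_diff by (intro tendsto_diff generator_limit assms)
  then show "x - y \<in> D" "A (x - y) = A x - A y"
    by (rule in_domainI)+
qed

lemma domain_scaleR:
  assumes "x \<in> D"
  shows "c *\<^sub>R x \<in> D" and "A (c *\<^sub>R x) = c *\<^sub>R A x"
proof -
  have "(difference_quotient (c *\<^sub>R x) \<longlongrightarrow> c *\<^sub>R A x) (at_right 0)"
    unfolding difference_quotient_scaleR by (intro tendsto_scaleR tendsto_const generator_limit assms)
  then show "c *\<^sub>R x \<in> D" "A (c *\<^sub>R x) = c *\<^sub>R A x"
    by (rule in_domainI)+
qed

lemma generator_commute:
  assumes "x \<in> D" "0 \<le> t"
  shows "S t x \<in> D" and "A (S t x) = S t (A x)"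
proof -
  have "\<forall>\<^sub>F h in at_right 0. S t (difference_quotient x h) = difference_quotient (S t x) h"
    using eventually_at_right_less[of 0] by eventually_elim
      (simp add: difference_quotient_def semigroup_commute assms blinfun.scaleR_right blinfun.diff_right)
  with blinfun.tendsto[OF tendsto_const generator_limit[OF assms(1)]]
  have "(difference_quotient (S t x) \<longlongrightarrow> S t (A x)) (at_right 0)"
    by (rule Lim_transform_eventually)
  then show "S t x \<in> D" "A (S t x) = S t (A x)"
    by (rule in_domainI)+
qed

lemma bounded_near_zero: "\<exists>\<eta>>0. \<exists>K\<ge>0. \<forall>t\<in>{0..\<eta>}. \<forall>x. norm (S t x) \<le> K * norm x"
proof (rule uniform_bound_near_zero)
  fix x
  obtain b where "0 < b" and near: "\<And>t. 0 < t \<Longrightarrow> t < b \<Longrightarrow> dist (S t x) x < 1"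
    using strongly_continuous[of x] unfolding tendsto_iff eventually_at_right_field
    by (metis zero_less_one add_0)
  have "norm (S t x) \<le> norm x + 1" if "t \<in> {0..b / 2}" for t
  proof (cases "t = 0")
    case False
    then have "dist (S t x) x < 1" using near that \<open>0 < b\<close> by auto
    then show ?thesis using norm_triangle_sub[of "S t x" x] by (simp add: dist_norm)
  qed simp
  then show "\<exists>b>0. \<exists>B. \<forall>t\<in>{0..b}. norm (S t x) \<le> B"
    using \<open>0 < b\<close> by (intro exI[of _ "b / 2"] conjI exI[of _ "norm x + 1"]) auto
qed

lemma bounded_on_interval: "\<exists>K. \<forall>t\<in>{0..b}. \<forall>x. norm (S t x) \<le> K * norm x"
proof -
  obtain \<eta> K0 where "0 < \<eta>" "0 \<le> K0" and K0: "\<And>t x. t \<in> {0..\<eta>} \<Longrightarrow> norm (S t x) \<le> K0 * norm x"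
    using bounded_near_zero by blast
  have steps: "\<exists>K. \<forall>t\<in>{0..real n * \<eta>}. \<forall>x. norm (S t x) \<le> K * norm x" for n
  proof (induction n)
    case 0
    then show ?case by (intro exI[of _ 1]) simp
  next
    case (Suc n)
    then obtain K where K: "\<And>t x. t \<in> {0..real n * \<eta>} \<Longrightarrow> norm (S t x) \<le> K * norm x"
      by blast
    have "norm (S t x) \<le> max K0 (K0 * K) * norm x" if "t \<in> {0..real (Suc n) * \<eta>}" for t x
    proof (cases "t \<le> \<eta>")
      case True
      then show ?thesis
        using K0[of t x] that by (smt (verit) atLeastAtMost_iff max.cobounded1 mult_right_mono norm_ge_zero)
    next
      case False
      then have "S t x = S \<eta> (S (t - \<eta>) x)"
        using semigroup_add[of \<eta> "t - \<eta>" x] \<open>0 < \<eta>\<close> by simp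
      then have "norm (S t x) \<le> K0 * norm (S (t - \<eta>) x)"
        using K0[of \<eta>] \<open>0 < \<eta>\<close> by simp
      also have "\<dots> \<le> K0 * (K * norm x)"
        using K[of "t - \<eta>" x] False that \<open>0 \<le> K0\<close>
        by (intro mult_left_mono) (auto simp: algebra_simps)
      finally show ?thesis
        by (smt (verit) max.cobounded2 mult.assoc mult_right_mono norm_ge_zero)
    qed
    then show ?case by blast
  qed
  obtain n :: nat where "b / \<eta> \<le> real n"
    using real_arch_simple by blast
  then have "b \<le> real n * \<eta>"
    using \<open>0 < \<eta>\<close> by (simp add: divide_le_eq)
  with steps[of n] show ?thesis
    by (meson atLeastAtMost_iff order_trans)
qed

lemma tendsto_semigroup_left:
  assumes "0 < \<tau>" and v: "(v \<longlongrightarrow> v0) (at_right 0)"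
  shows "((\<lambda>h. S (\<tau> - h) (v h)) \<longlongrightarrow> S \<tau> v0) (at_right 0)"
proof -
  obtain K where K: "\<And>t x. t \<in> {0..\<tau>} \<Longrightarrow> norm (S t x) \<le> K * norm x"
    using bounded_on_interval by blast
  have small: "((\<lambda>h. S (\<tau> - h) (w h)) \<longlongrightarrow> 0) (at_right 0)"
    if "(w \<longlongrightarrow> 0) (at_right 0)" for w
  proof (rule Lim_null_comparison)
    show "\<forall>\<^sub>F h in at_right 0. norm (S (\<tau> - h) (w h)) \<le> K * norm (w h)"
      by (rule eventually_at_rightI[of 0 \<tau>]) (auto intro!: K simp: assms)
    show "((\<lambda>h. K * norm (w h)) \<longlongrightarrow> 0) (at_right 0)"
      using tendsto_mult_right_zero[OF tendsto_norm_zero[OF that]] .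
  qed
  have "((\<lambda>h. S (\<tau> - h) (v h - v0) - S (\<tau> - h) (S h v0 - v0)) \<longlongrightarrow> 0 - 0) (at_right 0)"
    using v strongly_continuous by (intro tendsto_diff small) (simp_all add: LIM_zero)
  moreover have "\<forall>\<^sub>F h in at_right 0.
      S (\<tau> - h) (v h - v0) - S (\<tau> - h) (S h v0 - v0) = S (\<tau> - h) (v h) - S \<tau> v0"
    by (rule eventually_at_rightI[of 0 \<tau>])
      (auto simp: blinfun.diff_right semigroup_add[symmetric] assms)
  ultimately have "((\<lambda>h. S (\<tau> - h) (v h) - S \<tau> v0) \<longlongrightarrow> 0) (at_right 0)"
    by (simp add: tendsto_cong)
  then show ?thesis
    by (rule LIM_zero_cancel)
qed

lemma has_vector_derivative_semigroup:
  assumes "x \<in> D" "0 < \<tau>"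
  shows "((\<lambda>t. S t x) has_vector_derivative S \<tau> (A x)) (at \<tau>)"
proof (rule has_vector_derivative_at_split)
  have "\<forall>\<^sub>F h in at_right 0. S \<tau> (difference_quotient x h) = (1/h) *\<^sub>R (S (\<tau> + h) x - S \<tau> x)"
    by (rule eventually_at_rightI[of 0 1])
      (auto simp: difference_quotient_def blinfun.scaleR_right blinfun.diff_right semigroup_add assms(2) less_imp_le)
  with blinfun.tendsto[OF tendsto_const generator_limit[OF assms(1)]]
  show "((\<lambda>h. (1/h) *\<^sub>R (S (\<tau> + h) x - S \<tau> x)) \<longlongrightarrow> S \<tau> (A x)) (at_right 0)"
    by (rule Lim_transform_eventually)
  have "\<forall>\<^sub>F h in at_right 0. S (\<tau> - h) (difference_quotient x h) = (1/h) *\<^sub>R (S \<tau> x - S (\<tau> - h) x)"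
    by (rule eventually_at_rightI[of 0 \<tau>])
      (auto simp: difference_quotient_def blinfun.scaleR_right blinfun.diff_right semigroup_add[symmetric] assms(2))
  with tendsto_semigroup_left[OF assms(2) generator_limit[OF assms(1)]]
  show "((\<lambda>h. (1/h) *\<^sub>R (S \<tau> x - S (\<tau> - h) x)) \<longlongrightarrow> S \<tau> (A x)) (at_right 0)"
    by (rule Lim_transform_eventually)
qed

end

locale analytic_semigroup = C0_semigroup_generator +
  fixes C :: real
  assumes maps_into_domain: "0 < t \<Longrightarrow> S t x \<in> D"
    and norm_bound: "0 \<le> t \<Longrightarrow> t \<le> 1 \<Longrightarrow> norm (S t x) \<le> C * norm x"
    and generator_bound: "0 < t \<Longrightarrow> t \<le> 1 \<Longrightarrow> norm (A (S t x)) \<le> C / t * norm x"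
    and one_le_C: "1 \<le> C"
begin

lemma generator_in_domain:
  assumes "0 < t"
  shows "A (S t x) \<in> D"
proof -
  have "S t x = S (t / 2) (S (t / 2) x)"
    using semigroup_add[of "t / 2" "t / 2" x] assms by simp
  then have "A (S t x) = S (t / 2) (A (S (t / 2) x))"
    using generator_commute(2)[OF maps_into_domain] assms by simp
  then show ?thesis
    using maps_into_domain assms by simp
qed

lemma generator_power_eq_iterate:
  assumes "0 < \<tau>"
  shows "(A ^^ Suc k) (S \<tau> x) = ((\<lambda>y. A (S (\<tau> / Suc k) y)) ^^ Suc k) x"
  using assms
proof (induction k arbitrary: \<tau> x)
  case 0
  then show ?case by simp
next
  case (Suc k)
  define \<sigma> where "\<sigma> = \<tau> / Suc (Suc k)"
  have "0 < \<sigma>" "\<tau> - \<sigma> = real (Suc k) * \<sigma>"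
    using Suc.prems by (auto simp: \<sigma>_def field_simps)
  then have "0 < \<tau> - \<sigma>" by simp
  have "A (S \<tau> x) = A (S (\<tau> - \<sigma>) (S \<sigma> x))"
    using semigroup_add[of "\<tau> - \<sigma>" \<sigma> x] \<open>0 < \<sigma>\<close> \<open>0 < \<tau> - \<sigma>\<close> by simp
  also have "\<dots> = S (\<tau> - \<sigma>) (A (S \<sigma> x))"
    using generator_commute(2)[OF maps_into_domain[OF \<open>0 < \<sigma>\<close>]] \<open>0 < \<tau> - \<sigma>\<close> by simp
  finally have "(A ^^ Suc (Suc k)) (S \<tau> x) = (A ^^ Suc k) (S (\<tau> - \<sigma>) (A (S \<sigma> x)))"
    by (simp only: funpow_Suc_right o_apply)
  also have "\<dots> = ((\<lambda>y. A (S \<sigma> y)) ^^ Suc k) (A (S \<sigma> x))"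
    using Suc.IH[OF \<open>0 < \<tau> - \<sigma>\<close>] \<open>\<tau> - \<sigma> = real (Suc k) * \<sigma>\<close> by simp
  also have "\<dots> = ((\<lambda>y. A (S \<sigma> y)) ^^ Suc (Suc k)) x"
    by (simp only: funpow_Suc_right o_apply)
  finally show ?case by (simp add: \<sigma>_def)
qed

lemma generator_power_in_domain:
  assumes "0 < \<tau>"
  shows "(A ^^ k) (S \<tau> x) \<in> D"
proof (cases k)
  case 0
  then show ?thesis using maps_into_domain assms by simp
next
  case (Suc m)
  then show ?thesis
    using generator_power_eq_iterate[OF assms, of m x] generator_in_domain assms by simp
qed

lemma generator_power_commute:
  assumes "0 < \<sigma>" "0 \<le> r"
  shows "(A ^^ k) (S (r + \<sigma>) x) = S r ((A ^^ k) (S \<sigma> x))"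
proof (induction k)
  case 0
  then show ?case using semigroup_add assms by simp
next
  case (Suc k)
  then show ?case
    using generator_commute(2)[OF generator_power_in_domain[OF assms(1)] assms(2)] by simp
qed

lemma has_vector_derivative_generator_power:
  assumes "0 < \<tau>"
  shows "((\<lambda>t. (A ^^ k) (S t x)) has_vector_derivative (A ^^ Suc k) (S \<tau> x)) (at \<tau>)"
proof -
  define \<sigma> where "\<sigma> = \<tau> / 2"
  define z where "z = (A ^^ k) (S \<sigma> x)"
  have "0 < \<sigma>" "\<sigma> < \<tau>" "z \<in> D"
    using assms generator_power_in_domain by (auto simp: \<sigma>_def z_def)
  have "((\<lambda>t. S t z) \<circ> (\<lambda>t. t - \<sigma>) has_vector_derivative 1 *\<^sub>R S (\<tau> - \<sigma>) (A z)) (at \<tau>)"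
    using \<open>\<sigma> < \<tau>\<close> \<open>z \<in> D\<close>
    by (intro vector_diff_chain_at has_vector_derivative_semigroup derivative_eq_intros) auto
  moreover have "S (\<tau> - \<sigma>) (A z) = (A ^^ Suc k) (S \<tau> x)"
    using generator_power_commute[OF \<open>0 < \<sigma>\<close>, of "\<tau> - \<sigma>" "Suc k" x] \<open>\<sigma> < \<tau>\<close> by (simp add: z_def)
  ultimately have "((\<lambda>t. S (t - \<sigma>) z) has_vector_derivative (A ^^ Suc k) (S \<tau> x)) (at \<tau>)"
    by (simp add: o_def)
  then show ?thesis
  proof (rule has_vector_derivative_transform_within_open)
    show "S (t - \<sigma>) z = (A ^^ k) (S t x)" if "t \<in> {\<sigma><..}" for t
      using generator_power_commute[OF \<open>0 < \<sigma>\<close>, of "t - \<sigma>" k x] that by (simp add: z_def)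
  qed (use \<open>\<sigma> < \<tau>\<close> in auto)
qed

lemma norm_iterate_bound:
  assumes "0 < \<sigma>" "\<sigma> \<le> 1"
  shows "norm (((\<lambda>y. A (S \<sigma> y)) ^^ n) x) \<le> (C / \<sigma>) ^ n * norm x"
proof (induction n)
  case (Suc n)
  have "norm (((\<lambda>y. A (S \<sigma> y)) ^^ Suc n) x) \<le> C / \<sigma> * norm (((\<lambda>y. A (S \<sigma> y)) ^^ n) x)"
    using generator_bound assms by simp
  also have "\<dots> \<le> C / \<sigma> * ((C / \<sigma>) ^ n * norm x)"
    using Suc one_le_C assms by (intro mult_left_mono) auto
  finally show ?case by simp
qed simp

lemma norm_generator_power_bound:
  assumes "0 < \<delta>" "\<delta> \<le> 1"
  shows "norm ((A ^^ k) (S \<delta> y)) \<le> C * (exp 1 * C / \<delta>) ^ k * fact k * norm y"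
proof (cases k)
  case 0
  then show ?thesis using norm_bound assms by simp
next
  case (Suc m)
  have "norm ((A ^^ Suc m) (S \<delta> y)) \<le> (C / (\<delta> / Suc m)) ^ Suc m * norm y"
    unfolding generator_power_eq_iterate[OF assms(1)]
    using assms by (intro norm_iterate_bound) (auto simp: field_simps)
  then have bound: "norm ((A ^^ k) (S \<delta> y)) \<le> (C / (\<delta> / k)) ^ k * norm y"
    by (simp only: Suc)
  have "(C / (\<delta> / k)) ^ k = real k ^ k * (C / \<delta>) ^ k"
    by (simp add: power_mult_distrib[symmetric] mult.commute)
  also have "\<dots> \<le> (exp 1 ^ k * fact k) * (C / \<delta>) ^ k"
    using power_self_le_exp_fact one_le_C assms by (intro mult_right_mono) auto
  also have "\<dots> \<le> C * (exp 1 ^ k * fact k * (C / \<delta>) ^ k)"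
    using mult_right_mono[OF one_le_C, of "exp 1 ^ k * fact k * (C / \<delta>) ^ k"] one_le_C assms
    by simp
  finally have "(C / (\<delta> / k)) ^ k \<le> C * (exp 1 * C / \<delta>) ^ k * fact k"
    by (simp add: power_mult_distrib power_divide ac_simps)
  with bound show ?thesis
    by (meson mult_right_mono norm_ge_zero order_trans)
qed

end

lemma analytic_semigroup_if_generates:
  assumes "generates_analytic_semigroup D A S"
  obtains C where "analytic_semigroup S D A C"
proof -
  obtain C where C0: "C0_semigroup S" and generator: "semigroup_generator S D A"
    and into: "\<And>t x. 0 < t \<Longrightarrow> S t x \<in> D"
    and bound: "\<And>t x. 0 < t \<Longrightarrow> t \<le> 1 \<Longrightarrow> norm (A (S t x)) \<le> C / t * norm x"
    using assms unfolding generates_analytic_semigroup_def by blast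
  interpret C0_semigroup_generator S D A
    using C0 generator by unfold_locales
  obtain K where K: "\<And>t x. t \<in> {0..1} \<Longrightarrow> norm (S t x) \<le> K * norm x"
    using bounded_on_interval by blast
  have "analytic_semigroup S D A (max 1 (max C K))"
  proof
    show "norm (S t x) \<le> max 1 (max C K) * norm x" if "0 \<le> t" "t \<le> 1" for t x
      using K[of t x] that by (smt (verit) atLeastAtMost_iff max.cobounded2 max.coboundedI2 mult_right_mono norm_ge_zero)
    show "norm (A (S t x)) \<le> max 1 (max C K) / t * norm x" if "0 < t" "t \<le> 1" for t x
      using bound[OF that, of x] that
      by (smt (verit) divide_right_mono max.cobounded1 max.coboundedI2 mult_right_mono norm_ge_zero)
  qed (auto intro: into)
  then show ?thesis ..
qed

locale observed_analytic_semigroup = analytic_semigroup S D A C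
  for S :: "real \<Rightarrow> ('x::{real_normed_vector, complete_space} \<Rightarrow>\<^sub>L 'x)" and D A C +
  fixes B :: "'x \<Rightarrow> 'u::real_inner" and M :: real
  assumes observation_add: "x \<in> D \<Longrightarrow> y \<in> D \<Longrightarrow> B (x + y) = B x + B y"
    and observation_scaleR: "x \<in> D \<Longrightarrow> B (c *\<^sub>R x) = c *\<^sub>R B x"
    and observation_bound: "x \<in> D \<Longrightarrow> norm (B x) \<le> M * (norm x + norm (A x))"
    and one_le_M: "1 \<le> M"
begin

lemma observation_diff:
  assumes "x \<in> D" "y \<in> D"
  shows "B (x - y) = B x - B y"
  using observation_add[OF assms(1) domain_scaleR(1)[OF assms(2)], of "-1"]
    observation_scaleR[OF assms(2), of "-1"]
  by simp

lemma linear_combination_in_domain: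
  assumes "x \<in> D" "y \<in> D" "z \<in> D"
  shows "x - y - c *\<^sub>R z \<in> D"
    and "A (x - y - c *\<^sub>R z) = A x - A y - c *\<^sub>R A z"
    and "B (x - y - c *\<^sub>R z) = B x - B y - c *\<^sub>R B z"
  using assms domain_diff domain_scaleR observation_diff observation_scaleR by simp_all

lemma has_vector_derivative_observation:
  assumes F: "(F has_vector_derivative F') (at \<tau>)"
    and AF: "((\<lambda>s. A (F s)) has_vector_derivative A F') (at \<tau>)"
    and domain: "\<forall>\<^sub>F s in at \<tau>. F s \<in> D" "F \<tau> \<in> D" "F' \<in> D"
  shows "((\<lambda>s. B (F s)) has_vector_derivative B F') (at \<tau>)"
proof -
  define R where "R s = F s - F \<tau> - (s - \<tau>) *\<^sub>R F'" for s
  have remainders: "((\<lambda>s. norm (R s) / norm (s - \<tau>)) \<longlongrightarrow> 0) (at \<tau>)"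
      "((\<lambda>s. norm (A (F s) - A (F \<tau>) - (s - \<tau>) *\<^sub>R A F') / norm (s - \<tau>)) \<longlongrightarrow> 0) (at \<tau>)"
    using F AF unfolding R_def has_vector_derivative_def has_derivative_iff_norm by blast+
  have "((\<lambda>s. norm (B (F s) - B (F \<tau>) - (s - \<tau>) *\<^sub>R B F') / norm (s - \<tau>)) \<longlongrightarrow> 0) (at \<tau>)"
  proof (rule Lim_null_comparison)
    show "\<forall>\<^sub>F s in at \<tau>. norm (norm (B (F s) - B (F \<tau>) - (s - \<tau>) *\<^sub>R B F') / norm (s - \<tau>))
        \<le> M * (norm (R s) / norm (s - \<tau>)
             + norm (A (F s) - A (F \<tau>) - (s - \<tau>) *\<^sub>R A F') / norm (s - \<tau>))"
      using domain(1)
    proof eventually_elim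
      case (elim s)
      then have "norm (B (F s) - B (F \<tau>) - (s - \<tau>) *\<^sub>R B F')
          \<le> M * (norm (R s) + norm (A (F s) - A (F \<tau>) - (s - \<tau>) *\<^sub>R A F'))"
        using observation_bound[of "R s"] linear_combination_in_domain[OF elim domain(2,3)]
        by (simp add: R_def)
      then show ?case
        by (simp add: divide_right_mono add_divide_distrib[symmetric] mult.assoc)
    qed
    show "((\<lambda>s. M * (norm (R s) / norm (s - \<tau>)
             + norm (A (F s) - A (F \<tau>) - (s - \<tau>) *\<^sub>R A F') / norm (s - \<tau>))) \<longlongrightarrow> 0) (at \<tau>)"
      using tendsto_mult_right_zero[OF tendsto_add_zero[OF remainders]] .
  qed
  then show ?thesis
    unfolding has_vector_derivative_def has_derivative_iff_norm
    by (simp add: bounded_linear_scaleR_left)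
qed

lemma has_vector_derivative_observed_generator_power:
  assumes "0 < \<tau>"
  shows "((\<lambda>t. B ((A ^^ k) (S t x))) has_vector_derivative B ((A ^^ Suc k) (S \<tau> x))) (at \<tau>)"
proof (rule has_vector_derivative_observation)
  show "((\<lambda>t. (A ^^ k) (S t x)) has_vector_derivative (A ^^ Suc k) (S \<tau> x)) (at \<tau>)"
    using has_vector_derivative_generator_power[OF assms] .
  show "((\<lambda>t. A ((A ^^ k) (S t x))) has_vector_derivative A ((A ^^ Suc k) (S \<tau> x))) (at \<tau>)"
    using has_vector_derivative_generator_power[OF assms, of "Suc k"] by simp
  show "\<forall>\<^sub>F t in at \<tau>. (A ^^ k) (S t x) \<in> D"
    using order_tendstoD(1)[OF tendsto_ident_at assms]
    by eventually_elim (rule generator_power_in_domain)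
qed (use generator_power_in_domain[OF assms, of k] generator_power_in_domain[OF assms, of "Suc k"] in simp_all)

lemma norm_observed_generator_power_bound:
  assumes "0 < \<delta>" "\<delta> \<le> 1"
  shows "norm (B ((A ^^ k) (S \<delta> y)))
      \<le> 2 * M * C * norm y * (exp 1 * C / \<delta>) ^ Suc k * fact (Suc k)"
proof -
  define \<Lambda> where "\<Lambda> = exp 1 * C / \<delta>"
  have "1 \<le> exp 1 * C"
    using mult_mono[of 1 "exp 1" 1 C] one_le_C by simp
  then have "1 \<le> \<Lambda>"
    using assms by (simp add: \<Lambda>_def field_simps)
  have "\<Lambda> ^ k * fact k \<le> \<Lambda> ^ Suc k * fact (Suc k)"
    using \<open>1 \<le> \<Lambda>\<close> by (intro mult_mono power_increasing fact_mono) auto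
  have "norm (B ((A ^^ k) (S \<delta> y))) \<le> M * (norm ((A ^^ k) (S \<delta> y)) + norm ((A ^^ Suc k) (S \<delta> y)))"
    using observation_bound generator_power_in_domain assms by simp
  also have "\<dots> \<le> M * (C * \<Lambda> ^ k * fact k * norm y + C * \<Lambda> ^ Suc k * fact (Suc k) * norm y)"
    using norm_generator_power_bound[OF assms, of k y] norm_generator_power_bound[OF assms, of "Suc k" y] one_le_M
    by (intro mult_left_mono add_mono) (auto simp: \<Lambda>_def simp del: funpow.simps)
  also have "\<dots> \<le> M * (C * \<Lambda> ^ Suc k * fact (Suc k) * norm y + C * \<Lambda> ^ Suc k * fact (Suc k) * norm y)"
    using \<open>\<Lambda> ^ k * fact k \<le> \<Lambda> ^ Suc k * fact (Suc k)\<close> one_le_M one_le_C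
    by (intro mult_left_mono add_mono mult_right_mono) (auto simp: mult.assoc)
  finally show ?thesis
    by (simp add: \<Lambda>_def algebra_simps)
qed

lemma observed_energy_derivatives:
  fixes x :: 'x
  assumes "0 < t"
  defines "h \<equiv> \<lambda>j \<tau>. B ((A ^^ j) (S \<tau> x))"
  shows "(deriv ^^ n) (\<lambda>\<tau>. (norm (B (S \<tau> x)))\<^sup>2) t = inner_Leibniz_sum h n t"
    and "((deriv ^^ n) (\<lambda>\<tau>. (norm (B (S \<tau> x)))\<^sup>2) has_real_derivative
           (deriv ^^ Suc n) (\<lambda>\<tau>. (norm (B (S \<tau> x)))\<^sup>2) t) (at t)"
proof -
  have energy: "(\<lambda>\<tau>. (norm (B (S \<tau> x)))\<^sup>2) = (\<lambda>\<tau>. inner (h 0 \<tau>) (h 0 \<tau>))"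
    by (simp add: h_def power2_norm_eq_inner)
  have "((\<lambda>\<tau>. h k \<tau>) has_vector_derivative h (Suc k) \<sigma>) (at \<sigma>)" if "\<sigma> \<in> {0<..}" for \<sigma> k
    using has_vector_derivative_observed_generator_power that by (simp add: h_def)
  from higher_deriv_inner_self[where h=h, OF open_greaterThan _ this] assms(1)
  show "(deriv ^^ n) (\<lambda>\<tau>. (norm (B (S \<tau> x)))\<^sup>2) t = inner_Leibniz_sum h n t"
    and "((deriv ^^ n) (\<lambda>\<tau>. (norm (B (S \<tau> x)))\<^sup>2) has_real_derivative
           (deriv ^^ Suc n) (\<lambda>\<tau>. (norm (B (S \<tau> x)))\<^sup>2) t) (at t)"
    unfolding energy by simp_all
qed

lemma observed_energy_deriv_estimate:
  assumes "0 \<le> s" "s < t" "t - s \<le> 1"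
  shows "\<bar>(deriv ^^ \<beta>) (\<lambda>\<tau>. (norm (B (S \<tau> x)))\<^sup>2) t\<bar>
    \<le> (4 * M\<^sup>2 * C\<^sup>2 * (exp 1 * C)\<^sup>2)
      * ((t - s) powr (-2) * fact \<beta> / (1 / (4 * exp 1 * C) * (t - s)) ^ \<beta>) * (norm (S s x))\<^sup>2"
proof -
  define \<delta> where "\<delta> = t - s"
  define \<Lambda> where "\<Lambda> = exp 1 * C / \<delta>"
  define a where "a = 2 * M * C * norm (S s x)"
  have \<delta>: "0 < \<delta>" "\<delta> \<le> 1" using assms by (auto simp: \<delta>_def)
  have "0 \<le> a" "0 \<le> \<Lambda>"
    using one_le_C one_le_M \<delta> by (auto simp: a_def \<Lambda>_def)
  have "S t x = S \<delta> (S s x)"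
    using semigroup_add[of \<delta> s x] assms by (simp add: \<delta>_def)
  then have bound: "norm (B ((A ^^ j) (S t x))) \<le> a * \<Lambda> ^ Suc j * fact (Suc j)" for j
    using norm_observed_generator_power_bound[OF \<delta>, of j "S s x"] by (simp add: a_def \<Lambda>_def)
  have "(deriv ^^ \<beta>) (\<lambda>\<tau>. (norm (B (S \<tau> x)))\<^sup>2) t
      = inner_Leibniz_sum (\<lambda>j \<tau>. B ((A ^^ j) (S \<tau> x))) \<beta> t"
    using assms by (intro observed_energy_derivatives(1)) linarith
  then have "\<bar>(deriv ^^ \<beta>) (\<lambda>\<tau>. (norm (B (S \<tau> x)))\<^sup>2) t\<bar> \<le> a\<^sup>2 * \<Lambda> ^ (\<beta> + 2) * 4 ^ \<beta> * fact \<beta>"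
    using abs_inner_Leibniz_sum_le[where h = "\<lambda>j \<tau>. B ((A ^^ j) (S \<tau> x))", OF bound \<open>0 \<le> a\<close> \<open>0 \<le> \<Lambda>\<close>]
    by simp
  also have "a\<^sup>2 * \<Lambda> ^ (\<beta> + 2) * 4 ^ \<beta> * fact \<beta>
      = (4 * M\<^sup>2 * C\<^sup>2 * (exp 1 * C)\<^sup>2) * (1 / \<delta>\<^sup>2 * fact \<beta> * (4 * exp 1 * C / \<delta>) ^ \<beta>) * (norm (S s x))\<^sup>2"
  proof -
    have "\<Lambda> ^ (\<beta> + 2) * 4 ^ \<beta> = (exp 1 * C)\<^sup>2 * (1 / \<delta>\<^sup>2) * (4 * exp 1 * C / \<delta>) ^ \<beta>"
      by (simp add: \<Lambda>_def power_add power_mult_distrib power_divide power2_eq_square mult_ac)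
    moreover have "a\<^sup>2 * (P * Q) * fact \<beta>
        = 4 * M\<^sup>2 * C\<^sup>2 * (exp 1 * C)\<^sup>2 * (R * fact \<beta> * W) * (norm (S s x))\<^sup>2"
      if "P * Q = (exp 1 * C)\<^sup>2 * R * W" for P Q R W :: real
      unfolding that by (simp add: a_def power_mult_distrib mult_ac)
    ultimately show ?thesis
      by (simp only: mult.assoc)
  qed
  also have "1 / \<delta>\<^sup>2 * fact \<beta> * (4 * exp 1 * C / \<delta>) ^ \<beta>
      = \<delta> powr (-2) * fact \<beta> / (1 / (4 * exp 1 * C) * \<delta>) ^ \<beta>"
  proof -
    have "\<delta> powr (-2) = 1 / \<delta>\<^sup>2"
      using \<delta> powr_realpow[of \<delta> 2] by (simp add: powr_minus divide_inverse)
    moreover have "(4 * exp 1 * C / \<delta>) ^ \<beta> = 1 / (1 / (4 * exp 1 * C) * \<delta>) ^ \<beta>"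
      by (simp add: power_divide)
    ultimately show ?thesis
      by simp
  qed
  finally show ?thesis
    by (simp only: \<delta>_def)
qed

lemma observed_energy_estimate:
  "\<exists>K \<rho>. 1 \<le> K \<and> 0 < \<rho> \<and> \<rho> < 1 \<and>
     (\<forall>x s t \<beta>. 0 \<le> s \<longrightarrow> s < t \<longrightarrow> t - s \<le> 1 \<longrightarrow>
        \<bar>(deriv ^^ \<beta>) (\<lambda>\<tau>. (norm (B (S \<tau> x)))\<^sup>2) t\<bar>
          \<le> K * ((t - s) powr (-2) * fact \<beta> / (\<rho> * (t - s)) ^ \<beta>) * (norm (S s x))\<^sup>2)"
proof (intro exI conjI allI impI)
  have "1 \<le> exp 1 * C"
    using mult_mono[of 1 "exp 1" 1 C] one_le_C by simp
  then have "1 * 1 * 1 \<le> M\<^sup>2 * C\<^sup>2 * (exp 1 * C)\<^sup>2"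
    using one_le_M one_le_C by (intro mult_mono one_le_power) auto
  then show "1 \<le> 4 * M\<^sup>2 * C\<^sup>2 * (exp 1 * C)\<^sup>2" by simp
  show "0 < 1 / (4 * exp 1 * C)" "1 / (4 * exp 1 * C) < 1"
    using \<open>1 \<le> exp 1 * C\<close> by (auto simp: field_simps)
qed (rule observed_energy_deriv_estimate)

end

lemma (in analytic_semigroup) observed_if_bounded_on_graph_norm:
  assumes "bounded_on_graph_norm D A B"
  obtains M where "observed_analytic_semigroup S D A C B M"
proof -
  obtain M where add: "\<And>x y. x \<in> D \<Longrightarrow> y \<in> D \<Longrightarrow> B (x + y) = B x + B y"
    and scaleR: "\<And>c x. x \<in> D \<Longrightarrow> B (c *\<^sub>R x) = c *\<^sub>R B x"
    and bound: "\<And>x. x \<in> D \<Longrightarrow> norm (B x) \<le> M * (norm x + norm (A x))"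
    using assms unfolding bounded_on_graph_norm_def by blast
  have "observed_analytic_semigroup S D A C B (max 1 M)"
  proof
    show "norm (B x) \<le> max 1 M * (norm x + norm (A x))" if "x \<in> D" for x
      using bound[OF that] by (smt (verit) max.cobounded2 mult_right_mono norm_ge_zero)
  qed (auto intro: add scaleR)
  then show ?thesis ..
qed

theorem lemma2p1:
  fixes S :: "real \<Rightarrow> ('x::{real_inner, complete_space} \<Rightarrow>\<^sub>L 'x)"
    and D :: "'x set" and A :: "'x \<Rightarrow> 'x"
    and B :: "'x \<Rightarrow> 'u::{real_inner, complete_space}"
  assumes "generates_analytic_semigroup D A S"
    and "bounded_on_graph_norm D A B"
  shows "(\<forall>u0\<in>D. real_analytic_on (\<lambda>t. (norm (B (blinfun_apply (S t) u0)))\<^sup>2) {0<..})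
       \<and> (\<exists>K \<rho>. K \<ge> 1 \<and> 0 < \<rho> \<and> \<rho> < 1 \<and>
            (\<forall>u0\<in>D. \<forall>s t. 0 \<le> s \<longrightarrow> s < t \<longrightarrow> t - s \<le> 1 \<longrightarrow>
               (\<forall>\<beta>::nat.
                  \<bar>(deriv ^^ \<beta>) (\<lambda>\<tau>. (norm (B (blinfun_apply (S \<tau>) u0)))\<^sup>2) t\<bar>
                    \<le> K * ((t - s) powr (-2) * fact \<beta> / (\<rho> * (t - s)) ^ \<beta>)
                        * (norm (blinfun_apply (S s) u0))\<^sup>2)))"
proof -
  obtain C where "analytic_semigroup S D A C"
    using analytic_semigroup_if_generates[OF assms(1)] .
  then obtain M where "observed_analytic_semigroup S D A C B M"
    using analytic_semigroup.observed_if_bounded_on_graph_norm[OF _ assms(2)] by blast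
  then interpret observed_analytic_semigroup S D A C B M .
  obtain K \<rho> where "1 \<le> K" "0 < \<rho>" "\<rho> < 1"
    and estimate: "\<And>x s t \<beta>. 0 \<le> s \<Longrightarrow> s < t \<Longrightarrow> t - s \<le> 1 \<Longrightarrow>
        \<bar>(deriv ^^ \<beta>) (\<lambda>\<tau>. (norm (B (S \<tau> x)))\<^sup>2) t\<bar>
          \<le> K * ((t - s) powr (-2) * fact \<beta> / (\<rho> * (t - s)) ^ \<beta>) * (norm (S s x))\<^sup>2"
    using observed_energy_estimate by blast
  have "real_analytic_on (\<lambda>t. (norm (B (S t x)))\<^sup>2) {0<..}" for x
    by (rule real_analytic_on_if_deriv_estimate[OF observed_energy_derivatives(2) estimate])
      (use \<open>1 \<le> K\<close> \<open>0 < \<rho>\<close> \<open>\<rho> < 1\<close> in auto)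
  then show ?thesis
    using estimate \<open>1 \<le> K\<close> \<open>0 < \<rho>\<close> \<open>\<rho> < 1\<close> by blast
qed

end
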